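(* Fix $\alpha\ge 1$, $\kappa>0$, $\epsilon_0>0$, $L>0$, and a fixed finite collection of disjoint closed subsets $T_1,\dots,T_m\subset\mathcal M$. Let $\mathcal P(\epsilon_0,L,d)$ be the class of joint distributions of $(X,Y)$, with $X\in\mathcal M$ having a density $f_X$ and $Y\in\{0,1\}$, such that each $T_j$ is a cluster with respect to $\alpha$ and $\kappa$ and Assumptions (A1), (A2), (A3) below hold. Then for all $n_\ell\in\mathbb N^+$, $$\inf_{\hat h}\ \sup_{\mathbb P_{X,Y}\in\mathcal P(\epsilon_0,L,d)} E_{n_\ell}\{\mathcal R_{\mathcal T}(\hat h)\}-\mathcal R_{\mathcal T}(h^* )\ \ge\ C_1\exp(-C_2 n_\ell)$$ for some constants $C_1,C_2>0$, where the infimum is over all classifiers $\hat h$ constructed from an i.i.d. labeled sample $\{(X_i,Y_i)\}_{i=1}^{n_\ell}$ drawn from $\mathbb P_{X,Y}$.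
   Context: $\mathcal M\subset\mathbb R^D$ is a compact Riemannian manifold of intrinsic dimension $d$ (with the metric induced from $\mathbb R^D$). For $\alpha\ge1$ and $x_1,x_2\in\mathcal M$, the power-$\alpha$ Fermat distance is $$d_{\mathcal M,\alpha}(x_1,x_2)=\inf_\gamma\Big[\mu_{\alpha,d}\int_0^1\frac{\|\gamma'(t)\|_{\mathbb R^D}}{f_X\{\gamma(t)\}^{(\alpha-1)/d}}\,dt\Big]^{1/\alpha},$$ the infimum over continuously differentiable paths $\gamma:[0,1]\to\mathcal M$ with $\gamma(0)=x_1,\gamma(1)=x_2$, where $\mu_{\alpha,d}>0$ is a (percolation) constant depending only on $\alpha,d$, with $\mu_{1,d}=1$. A closed set $T\subset\mathcal M$ is a cluster with respect to $\alpha,\kappa$ if for all $x_1,x_2\in T$ the optimal path $\gamma_{12}$ of $d_{\mathcal M,\alpha}(x_1,x_2)$ satisfies $\gamma_{12}(t)\in T$ and $f_X\{\gamma_{12}(t)\}\ge\kappa$ for all $t\in[0,1]$. Let $\eta(x)=P(Y=1\mid X=x)$. (A1) $\inf_{x\in\cup_{j=1}^mT_j}|2\eta(x)-1|>\epsilon_0$. (A2) $|\eta(x_1)-\eta(x_2)|\le L\,d_{\mathcal M,\alpha}(x_1,x_2)$ for all $x_1,x_2\in\mathcal M$. (A3) For every $x\in\mathcal M$ there is $t_0>0$ such that for all $t\le t_0$, $P(d_{\mathcal M,\alpha}(X,x)\le t)\ge Cf_X(x)t^d$, for a positive constant $C$. For a classifier $h$, $\mathcal R_{\mathcal T}(h)=P(Y\ne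 h(X),\,X\in\cup_{j=1}^mT_j)$; $h^*(x)=\mathbb 1\{\eta(x)>1/2\}$ is the Bayes classifier; $E_{n_\ell}$ denotes expectation over the labeled sample. *)

theory Defs
  imports "HOL-Probability.Probability"
begin

definition dir_deriv :: "'a::euclidean_space \<Rightarrow> ('a \<Rightarrow> 'b::real_normed_vector) \<Rightarrow> 'a \<Rightarrow> 'b" where
  "dir_deriv v g x = frechet_derivative g (at x) v"

definition smooth_on :: "'a::euclidean_space set \<Rightarrow> ('a \<Rightarrow> 'b::real_normed_vector) \<Rightarrow> bool" where
  "smooth_on U g \<longleftrightarrow> open U \<and>
     (\<forall>vs::'a list. continuous_on U (fold dir_deriv vs g) \<and>
                   (\<forall>x\<in>U. fold dir_deriv vs g differentiable (at x)))"

text \<open>M is a smooth embedded submanifold of dimension d: locally M is the graph of a smooth map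
  from (an open part of) a d-dimensional linear subspace S into its orthogonal complement.\<close>
definition embedded_submanifold :: "nat \<Rightarrow> 'a::euclidean_space set \<Rightarrow> bool" where
  "embedded_submanifold d M \<longleftrightarrow>
     (\<forall>x\<in>M. \<exists>S U W g. subspace S \<and> dim S = d \<and> open U \<and> x \<in> U \<and> smooth_on W g \<and>
        (\<forall>s\<in>W. \<forall>v\<in>S. orthogonal v (g s)) \<and>
        M \<inter> U = {s + g s | s. s \<in> S \<inter> W})"

definition compact_manifold :: "nat \<Rightarrow> 'a::euclidean_space set \<Rightarrow> bool" where
  "compact_manifold d M \<longleftrightarrow> compact M \<and> embedded_submanifold d M"

section \<open>Riemannian volume = d-dimensional Hausdorff measure\<close>

definition hausdorff_pre :: "nat \<Rightarrow> real \<Rightarrow> 'a::euclidean_space set \<Rightarrow> ennreal" where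
  "hausdorff_pre d \<delta> A =
     (INF C \<in> {C :: nat \<Rightarrow> 'a set. A \<subseteq> (\<Union>i. C i) \<and> (\<forall>i. bounded (C i) \<and> diameter (C i) \<le> \<delta>)}.
        (\<Sum>i. ennreal (unit_ball_vol (real d) * (diameter (C i) / 2) ^ d)))"

definition hausdorff_outer :: "nat \<Rightarrow> 'a::euclidean_space set \<Rightarrow> ennreal" where
  "hausdorff_outer d A = (SUP \<delta> \<in> {0<..}. hausdorff_pre d \<delta> A)"

definition vol_on :: "nat \<Rightarrow> 'a::euclidean_space set \<Rightarrow> 'a measure" where
  "vol_on d M = measure_of UNIV (sets borel) (\<lambda>A. hausdorff_outer d (A \<inter> M))"

definition adm_path :: "'a::euclidean_space set \<Rightarrow> 'a \<Rightarrow> 'a \<Rightarrow> (real \<Rightarrow> 'a) \<Rightarrow> bool" where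
  "adm_path M x1 x2 \<gamma> \<longleftrightarrow> \<gamma> C1_differentiable_on {0..1} \<and> \<gamma> ` {0..1} \<subseteq> M \<and> \<gamma> 0 = x1 \<and> \<gamma> 1 = x2"

text \<open>Weight 1 / f^((alpha-1)/d), with the convention 1/0 = infinity when the exponent is positive.\<close>
definition fermat_weight :: "real \<Rightarrow> nat \<Rightarrow> ('a \<Rightarrow> real) \<Rightarrow> 'a \<Rightarrow> ennreal" where
  "fermat_weight \<alpha> d f y =
     (if \<alpha> = 1 then 1 else if f y > 0 then ennreal (1 / (f y powr ((\<alpha> - 1) / real d))) else \<infinity>)"

definition fermat_cost :: "real \<Rightarrow> nat \<Rightarrow> ('a::euclidean_space \<Rightarrow> real) \<Rightarrow> (real \<Rightarrow> 'a) \<Rightarrow> ennreal" where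
  "fermat_cost \<alpha> d f \<gamma> =
     (\<integral>\<^sup>+ t \<in> {0..1}. ennreal (norm (vector_derivative \<gamma> (at t))) * fermat_weight \<alpha> d f (\<gamma> t) \<partial>lborel)"

definition fermat_inf :: "real \<Rightarrow> nat \<Rightarrow> 'a::euclidean_space set \<Rightarrow> ('a \<Rightarrow> real) \<Rightarrow> 'a \<Rightarrow> 'a \<Rightarrow> ennreal" where
  "fermat_inf \<alpha> d M f x1 x2 = (INF \<gamma> \<in> {\<gamma>. adm_path M x1 x2 \<gamma>}. fermat_cost \<alpha> d f \<gamma>)"

definition fermat_dist :: "(real \<Rightarrow> nat \<Rightarrow> real) \<Rightarrow> real \<Rightarrow> nat \<Rightarrow> 'a::euclidean_space set \<Rightarrow> ('a \<Rightarrow> real)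
    \<Rightarrow> 'a \<Rightarrow> 'a \<Rightarrow> ennreal" where
  "fermat_dist \<mu> \<alpha> d M f x1 x2 =
     (let c = fermat_inf \<alpha> d M f x1 x2 in
      if c = \<infinity> then \<infinity> else ennreal ((\<mu> \<alpha> d * enn2real c) powr (1 / \<alpha>)))"

text \<open>Optimal paths: admissible paths attaining the infimum (x \<mapsto> (mu x)^(1/alpha) is monotone).\<close>
definition optimal_path :: "real \<Rightarrow> nat \<Rightarrow> 'a::euclidean_space set \<Rightarrow> ('a \<Rightarrow> real) \<Rightarrow> 'a \<Rightarrow> 'a \<Rightarrow> (real \<Rightarrow> 'a) \<Rightarrow> bool" where
  "optimal_path \<alpha> d M f x1 x2 \<gamma> \<longleftrightarrow>
     adm_path M x1 x2 \<gamma> \<and> fermat_cost \<alpha> d f \<gamma> = fermat_inf \<alpha> d M f x1 x2"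

definition is_cluster :: "real \<Rightarrow> nat \<Rightarrow> 'a::euclidean_space set \<Rightarrow> ('a \<Rightarrow> real) \<Rightarrow> real \<Rightarrow> 'a set \<Rightarrow> bool" where
  "is_cluster \<alpha> d M f \<kappa> T \<longleftrightarrow> closed T \<and> T \<subseteq> M \<and>
     (\<forall>x1\<in>T. \<forall>x2\<in>T. \<forall>\<gamma>. optimal_path \<alpha> d M f x1 x2 \<gamma> \<longrightarrow>
        (\<forall>t\<in>{0..1}. \<gamma> t \<in> T \<and> f (\<gamma> t) \<ge> \<kappa>))"

text \<open>Joint law of (X,Y): X has density f w.r.t. vol_M, and P(Y = True | X = x) = eta x.\<close>
definition joint_law :: "nat \<Rightarrow> 'a::euclidean_space set \<Rightarrow> ('a \<Rightarrow> real) \<Rightarrow> ('a \<Rightarrow> real) \<Rightarrow> ('a \<times> bool) measure" where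
  "joint_law d M f \<eta> = density (vol_on d M \<Otimes>\<^sub>M count_space UNIV)
      (\<lambda>(x, y). ennreal (f x * (if y then \<eta> x else 1 - \<eta> x)))"

definition valid_model :: "nat \<Rightarrow> 'a::euclidean_space set \<Rightarrow> ('a \<Rightarrow> real) \<Rightarrow> ('a \<Rightarrow> real) \<Rightarrow> bool" where
  "valid_model d M f \<eta> \<longleftrightarrow> f \<in> borel_measurable borel \<and> (\<forall>x. f x \<ge> 0) \<and>
     (\<integral>\<^sup>+ x. ennreal (f x) \<partial>vol_on d M) = 1 \<and>
     \<eta> \<in> borel_measurable borel \<and> (\<forall>x. 0 \<le> \<eta> x \<and> \<eta> x \<le> 1)"

definition model_class ::
  "(real \<Rightarrow> nat \<Rightarrow> real) \<Rightarrow> real \<Rightarrow> nat \<Rightarrow> 'a::euclidean_space set \<Rightarrow> real \<Rightarrow> real \<Rightarrow> real \<Rightarrow> real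
    \<Rightarrow> nat \<Rightarrow> (nat \<Rightarrow> 'a set) \<Rightarrow> (('a \<Rightarrow> real) \<times> ('a \<Rightarrow> real)) set" where
  "model_class \<mu> \<alpha> d M \<kappa> \<epsilon>0 L C m T = {(f, \<eta>).
     valid_model d M f \<eta> \<and>
     (\<forall>j<m. is_cluster \<alpha> d M f \<kappa> (T j)) \<and>
     (\<exists>\<delta>>\<epsilon>0. \<forall>x\<in>(\<Union>j<m. T j). \<bar>2 * \<eta> x - 1\<bar> \<ge> \<delta>) \<and>
     (\<forall>x1\<in>M. \<forall>x2\<in>M. ennreal \<bar>\<eta> x1 - \<eta> x2\<bar> \<le> ennreal L * fermat_dist \<mu> \<alpha> d M f x1 x2) \<and>
     (\<forall>x\<in>M. \<exists>t0>0. \<forall>t. 0 < t \<and> t \<le> t0 \<longrightarrow>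
        (\<integral>\<^sup>+ y \<in> {y. fermat_dist \<mu> \<alpha> d M f y x \<le> ennreal t}. ennreal (f y) \<partial>vol_on d M)
          \<ge> ennreal (C * f x * t ^ d))}"

definition risk_T :: "nat \<Rightarrow> 'a::euclidean_space set \<Rightarrow> ('a \<Rightarrow> real) \<Rightarrow> ('a \<Rightarrow> real) \<Rightarrow> nat \<Rightarrow> (nat \<Rightarrow> 'a set)
    \<Rightarrow> ('a \<Rightarrow> bool) \<Rightarrow> ennreal" where
  "risk_T d M f \<eta> m T h = emeasure (joint_law d M f \<eta>) {(x, y). y \<noteq> h x \<and> x \<in> (\<Union>j<m. T j)}"

definition bayes :: "('a \<Rightarrow> real) \<Rightarrow> 'a \<Rightarrow> bool" where
  "bayes \<eta> x \<longleftrightarrow> \<eta> x > 1 / 2"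

definition estimators :: "nat \<Rightarrow> ((nat \<Rightarrow> 'a::euclidean_space \<times> bool) \<Rightarrow> 'a \<Rightarrow> bool) set" where
  "estimators n = {h. (\<lambda>p. h (fst p) (snd p)) \<in>
      measurable (PiM {..<n} (\<lambda>_. borel \<Otimes>\<^sub>M count_space UNIV) \<Otimes>\<^sub>M borel) (count_space UNIV)}"

definition excess_risk :: "nat \<Rightarrow> 'a::euclidean_space set \<Rightarrow> nat \<Rightarrow> (nat \<Rightarrow> 'a set) \<Rightarrow> nat
    \<Rightarrow> ((nat \<Rightarrow> 'a \<times> bool) \<Rightarrow> 'a \<Rightarrow> bool) \<Rightarrow> ('a \<Rightarrow> real) \<Rightarrow> ('a \<Rightarrow> real) \<Rightarrow> ereal" where
  "excess_risk d M m T n h f \<eta> =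
     enn2ereal (\<integral>\<^sup>+ S. risk_T d M f \<eta> m T (h S) \<partial>PiM {..<n} (\<lambda>_. joint_law d M f \<eta>))
     - enn2ereal (risk_T d M f \<eta> m T (bayes \<eta>))"

end

(*
  Le Cam's two-point method. Take a member (f, eta) of the class with positive mass on
  T = T_1 u ... u T_m and shrink eta towards 1/2, eta' = 1/2 + s (eta - 1/2), with s < 1 so
  close to 1 that the margin on T still exceeds eps0. Both eta' and 1 - eta' stay in the class:
  the cluster condition and (A3) only involve f, and shrinking only decreases the Lipschitz
  quotient in (A2).
  As e <= eta' <= 1 - e with e = (1 - s)/2, the law of a labelled pair under eta' dominates e
  times its law under 1 - eta', so the n-sample laws compare with the factor e^n. The Bayes
  classifiers of eta' and 1 - eta' disagree everywhere on T, so the regrets of any classifier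
  under the two models add up to K = E[|2 eta' - 1|; X in T] > 0. Hence the two expected
  regrets of any estimator sum to at least e^n K, and one of them is at least (K/2) e^n.
*)
theory Submission
  imports Defs
begin

lemma nn_integral_PiM_dominated:
  fixes P Q :: "'b measure" and I :: "'i set"
  assumes sets_eq: "sets P = sets Q"
    and sigma_finite: "sigma_finite_measure P" "sigma_finite_measure Q"
    and dominated: "\<And>g. g \<in> borel_measurable P \<Longrightarrow> c * (\<integral>\<^sup>+y. g y \<partial>Q) \<le> (\<integral>\<^sup>+y. g y \<partial>P)"
    and "finite I" and \<phi>: "\<phi> \<in> borel_measurable (PiM I (\<lambda>_. P))"
  shows "c ^ card I * (\<integral>\<^sup>+x. \<phi> x \<partial>PiM I (\<lambda>_. Q)) \<le> (\<integral>\<^sup>+x. \<phi> x \<partial>PiM I (\<lambda>_. P))"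
  using \<open>finite I\<close> \<phi>
proof (induction I arbitrary: \<phi> rule: finite_induct)
  case empty
  then show ?case by (simp add: PiM_empty)
next
  case (insert i I)
  interpret P: product_sigma_finite "\<lambda>_::'i. P"
    using sigma_finite by (simp add: product_sigma_finite_def)
  interpret Q: product_sigma_finite "\<lambda>_::'i. Q"
    using sigma_finite by (simp add: product_sigma_finite_def)
  have sets_PiM_eq: "sets (PiM J (\<lambda>_::'i. P)) = sets (PiM J (\<lambda>_. Q))" for J
    by (rule sets_PiM_cong) (auto simp: sets_eq)
  have \<phi>_Q: "\<phi> \<in> borel_measurable (PiM (insert i I) (\<lambda>_. Q))"
    using insert.prems measurable_cong_sets[OF sets_PiM_eq refl] by blast
  define \<Psi> where "\<Psi> x = (\<integral>\<^sup>+y. \<phi> (x(i:=y)) \<partial>Q)" for x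
  have "(\<lambda>(x,y). \<phi> (x(i:=y))) \<in> borel_measurable (PiM I (\<lambda>_. Q) \<Otimes>\<^sub>M Q)"
    using measurable_comp[OF measurable_add_dim[of i I "\<lambda>_. Q"] \<phi>_Q]
    by (simp add: comp_def case_prod_beta')
  then have "\<Psi> \<in> borel_measurable (PiM I (\<lambda>_. Q))"
    using sigma_finite_measure.borel_measurable_nn_integral[OF sigma_finite(2)]
    unfolding \<Psi>_def by fastforce
  then have \<Psi>_P: "\<Psi> \<in> borel_measurable (PiM I (\<lambda>_. P))"
    using measurable_cong_sets[OF sets_PiM_eq refl] by blast
  have "c ^ card (insert i I) * (\<integral>\<^sup>+x. \<phi> x \<partial>PiM (insert i I) (\<lambda>_. Q))
      = c * (c ^ card I * (\<integral>\<^sup>+x. \<Psi> x \<partial>PiM I (\<lambda>_. Q)))"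
    using insert.hyps Q.product_nn_integral_insert[OF insert.hyps \<phi>_Q]
    by (simp add: \<Psi>_def mult.assoc)
  also have "\<dots> \<le> c * (\<integral>\<^sup>+x. \<Psi> x \<partial>PiM I (\<lambda>_. P))"
    by (intro mult_left_mono insert.IH \<Psi>_P) simp
  also have "\<dots> = (\<integral>\<^sup>+x. c * \<Psi> x \<partial>PiM I (\<lambda>_. P))"
    by (rule nn_integral_cmult[symmetric]) (rule \<Psi>_P)
  also have "\<dots> \<le> (\<integral>\<^sup>+x. (\<integral>\<^sup>+y. \<phi> (x(i:=y)) \<partial>P) \<partial>PiM I (\<lambda>_. P))"
  proof (rule nn_integral_mono)
    fix x assume "x \<in> space (PiM I (\<lambda>_. P))"
    from measurable_comp[OF measurable_component_update[OF this insert.hyps(2)] insert.prems]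
    show "c * \<Psi> x \<le> (\<integral>\<^sup>+y. \<phi> (x(i:=y)) \<partial>P)"
      unfolding \<Psi>_def by (intro dominated) (simp add: comp_def)
  qed
  also have "\<dots> = (\<integral>\<^sup>+x. \<phi> x \<partial>PiM (insert i I) (\<lambda>_. P))"
    using P.product_nn_integral_insert[OF insert.hyps insert.prems] by (simp only:)
  finally show ?case .
qed

lemma two_point_risk_lower_bound:
  fixes P Q :: "'b measure" and I :: "'i set"
  assumes sets_eq: "sets P = sets Q" and "prob_space P" "prob_space Q"
    and dominated: "\<And>g. g \<in> borel_measurable P \<Longrightarrow> ennreal c * (\<integral>\<^sup>+y. g y \<partial>Q) \<le> (\<integral>\<^sup>+y. g y \<partial>P)"
    and c: "0 \<le> c" "c \<le> 1" and "finite I"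
    and D: "D\<^sub>P \<in> borel_measurable (PiM I (\<lambda>_. P))" "D\<^sub>Q \<in> borel_measurable (PiM I (\<lambda>_. P))"
    and sum: "\<And>S. S \<in> space (PiM I (\<lambda>_. P)) \<Longrightarrow> D\<^sub>P S + D\<^sub>Q S = K"
  shows "ennreal (c ^ card I) * K \<le> (\<integral>\<^sup>+S. D\<^sub>P S \<partial>PiM I (\<lambda>_. P)) + (\<integral>\<^sup>+S. D\<^sub>Q S \<partial>PiM I (\<lambda>_. Q))"
proof -
  let ?P = "PiM I (\<lambda>_. P)" and ?Q = "PiM I (\<lambda>_. Q)"
  have sets_PiM_eq: "sets ?P = sets ?Q"
    by (rule sets_PiM_cong) (auto simp: sets_eq)
  have "prob_space ?Q"
    using \<open>prob_space Q\<close> by (rule prob_space_PiM)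
  have "K = (\<integral>\<^sup>+S. D\<^sub>P S + D\<^sub>Q S \<partial>?Q)"
    using prob_space.emeasure_space_1[OF \<open>prob_space ?Q\<close>] sum
    by (simp add: sets_eq_imp_space_eq[OF sets_PiM_eq] cong: nn_integral_cong)
  also have "\<dots> = (\<integral>\<^sup>+S. D\<^sub>P S \<partial>?Q) + (\<integral>\<^sup>+S. D\<^sub>Q S \<partial>?Q)"
    using D measurable_cong_sets[OF sets_PiM_eq refl] by (intro nn_integral_add) auto
  finally have "ennreal (c ^ card I) * K
      = ennreal c ^ card I * (\<integral>\<^sup>+S. D\<^sub>P S \<partial>?Q) + ennreal (c ^ card I) * (\<integral>\<^sup>+S. D\<^sub>Q S \<partial>?Q)"
    using c by (simp add: distrib_left ennreal_power)
  also have "\<dots> \<le> (\<integral>\<^sup>+S. D\<^sub>P S \<partial>?P) + 1 * (\<integral>\<^sup>+S. D\<^sub>Q S \<partial>?Q)"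
  proof (intro add_mono mult_right_mono)
    show "ennreal c ^ card I * (\<integral>\<^sup>+S. D\<^sub>P S \<partial>?Q) \<le> (\<integral>\<^sup>+S. D\<^sub>P S \<partial>?P)"
      using \<open>prob_space P\<close> \<open>prob_space Q\<close> dominated \<open>finite I\<close> D(1)
      by (intro nn_integral_PiM_dominated sets_eq) (auto intro: prob_space_imp_sigma_finite)
    show "ennreal (c ^ card I) \<le> 1"
      using c by (simp add: power_le_one)
  qed simp
  finally show ?thesis by simp
qed

lemma sets_vol_on [measurable_cong]: "sets (vol_on d M) = sets borel"
  unfolding vol_on_def by (subst sets_measure_of) (auto simp: sets.sigma_sets_eq[of borel, simplified])

lemma sets_joint_law [measurable_cong]:
  "sets (joint_law d M f \<eta>) = sets (borel \<Otimes>\<^sub>M count_space UNIV)"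
  unfolding joint_law_def sets_density by (rule sets_pair_measure_cong) (auto simp: sets_vol_on)

lemma valid_modelD:
  assumes "valid_model d M f \<eta>"
  shows "f \<in> borel_measurable borel" "\<eta> \<in> borel_measurable borel" "0 \<le> f x" "0 \<le> \<eta> x" "\<eta> x \<le> 1"
  using assms by (auto simp: valid_model_def)

lemma valid_model_flip: "valid_model d M f \<eta> \<Longrightarrow> valid_model d M f (\<lambda>x. 1 - \<eta> x)"
  by (auto simp: valid_model_def)

lemma nn_integral_joint_law:
  assumes v: "valid_model d M f \<eta>"
    and \<phi>[measurable]: "\<phi> \<in> borel_measurable (borel \<Otimes>\<^sub>M count_space UNIV)"
  shows "(\<integral>\<^sup>+z. \<phi> z \<partial>joint_law d M f \<eta>)
       = (\<integral>\<^sup>+x. ennreal (f x * \<eta> x) * \<phi> (x, True) + ennreal (f x * (1 - \<eta> x)) * \<phi> (x, False) \<partial>vol_on d M)"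
proof -
  note [measurable] = valid_modelD(1,2)[OF v]
  have "sigma_finite_measure (count_space (UNIV::bool set))"
    by (rule sigma_finite_measure_count_space_finite) simp
  then show ?thesis
    unfolding joint_law_def
    by (subst nn_integral_density, measurable,
        subst sigma_finite_measure.nn_integral_fst[symmetric], measurable)
       (simp add: nn_integral_count_space_finite UNIV_bool add.commute)
qed

lemma prob_space_joint_law:
  assumes v: "valid_model d M f \<eta>"
  shows "prob_space (joint_law d M f \<eta>)"
proof
  have "emeasure (joint_law d M f \<eta>) (space (joint_law d M f \<eta>)) = (\<integral>\<^sup>+z. 1 \<partial>joint_law d M f \<eta>)"
    by simp
  also have "\<dots> = (\<integral>\<^sup>+x. ennreal (f x * \<eta> x) + ennreal (f x * (1 - \<eta> x)) \<partial>vol_on d M)"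
    by (subst nn_integral_joint_law[OF v]) auto
  also have "\<dots> = (\<integral>\<^sup>+x. ennreal (f x) \<partial>vol_on d M)"
  proof (rule nn_integral_cong)
    fix x
    have "0 \<le> f x" "0 \<le> \<eta> x" "\<eta> x \<le> 1"
      using valid_modelD[OF v] by auto
    then show "ennreal (f x * \<eta> x) + ennreal (f x * (1 - \<eta> x)) = ennreal (f x)"
      by (subst ennreal_plus[symmetric]) (auto simp: algebra_simps mult_left_le_one_le)
  qed
  also have "\<dots> = 1"
    using v by (simp add: valid_model_def)
  finally show "emeasure (joint_law d M f \<eta>) (space (joint_law d M f \<eta>)) = 1" .
qed

lemma joint_law_dominated:
  assumes v: "valid_model d M f \<eta>" and v': "valid_model d M f \<eta>'" and "0 \<le> c"
    and le: "\<And>x. c * \<eta>' x \<le> \<eta> x" "\<And>x. c * (1 - \<eta>' x) \<le> 1 - \<eta> x"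
    and g: "g \<in> borel_measurable (joint_law d M f \<eta>)"
  shows "ennreal c * (\<integral>\<^sup>+z. g z \<partial>joint_law d M f \<eta>') \<le> (\<integral>\<^sup>+z. g z \<partial>joint_law d M f \<eta>)"
proof -
  note [measurable] = valid_modelD(1,2)[OF v] valid_modelD(2)[OF v']
  have [measurable]: "g \<in> borel_measurable (borel \<Otimes>\<^sub>M count_space UNIV)"
    using g by measurable
  have weight_le: "ennreal c * ennreal (f x * w') \<le> ennreal (f x * w)"
    if "c * w' \<le> w" for x w w'
    using mult_left_mono[OF that valid_modelD(3)[OF v, of x]] \<open>0 \<le> c\<close>
    by (simp add: ennreal_mult'[symmetric] ac_simps ennreal_leI)
  have "ennreal c * (\<integral>\<^sup>+z. g z \<partial>joint_law d M f \<eta>')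
      = (\<integral>\<^sup>+x. ennreal c * (ennreal (f x * \<eta>' x) * g (x, True)
                          + ennreal (f x * (1 - \<eta>' x)) * g (x, False)) \<partial>vol_on d M)"
    by (simp add: nn_integral_joint_law[OF v'] nn_integral_cmult)
  also have "\<dots> \<le> (\<integral>\<^sup>+x. ennreal (f x * \<eta> x) * g (x, True) + ennreal (f x * (1 - \<eta> x)) * g (x, False) \<partial>vol_on d M)"
    unfolding distrib_left mult.assoc[symmetric]
    by (intro nn_integral_mono add_mono mult_right_mono weight_le le) auto
  also have "\<dots> = (\<integral>\<^sup>+z. g z \<partial>joint_law d M f \<eta>)"
    by (simp add: nn_integral_joint_law[OF v])
  finally show ?thesis .
qed

lemma measurable_bayes [measurable]:
  "\<eta> \<in> borel_measurable borel \<Longrightarrow> bayes \<eta> \<in> measurable borel (count_space UNIV)"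
  unfolding bayes_def by measurable

lemma risk_T_eq_nn_integral:
  assumes v: "valid_model d M f \<eta>"
    and [measurable]: "g \<in> measurable borel (count_space UNIV)" "(\<Union>j<m. T j) \<in> sets borel"
  shows "risk_T d M f \<eta> m T g = (\<integral>\<^sup>+x. indicator (\<Union>j<m. T j) x * ennreal (f x) *
            ennreal (if g x then 1 - \<eta> x else \<eta> x) \<partial>vol_on d M)"
proof -
  let ?E = "{(x, y). y \<noteq> g x \<and> x \<in> (\<Union>j<m. T j)}"
  have "?E = {z \<in> space (borel \<Otimes>\<^sub>M count_space UNIV). snd z \<noteq> g (fst z) \<and> fst z \<in> (\<Union>j<m. T j)}"
    by (auto simp: space_pair_measure)
  also have "\<dots> \<in> sets (borel \<Otimes>\<^sub>M count_space UNIV)"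
    by measurable
  finally have [measurable]: "?E \<in> sets (borel \<Otimes>\<^sub>M count_space UNIV)" .
  then have "risk_T d M f \<eta> m T g = (\<integral>\<^sup>+z. indicator ?E z \<partial>joint_law d M f \<eta>)"
    unfolding risk_T_def by (simp only: nn_integral_indicator sets_joint_law)
  also have "\<dots> = (\<integral>\<^sup>+x. ennreal (f x * \<eta> x) * indicator ?E (x, True)
                       + ennreal (f x * (1 - \<eta> x)) * indicator ?E (x, False) \<partial>vol_on d M)"
    by (rule nn_integral_joint_law[OF v]) measurable
  also have "\<dots> = (\<integral>\<^sup>+x. indicator (\<Union>j<m. T j) x * ennreal (f x) *
                       ennreal (if g x then 1 - \<eta> x else \<eta> x) \<partial>vol_on d M)"
    using valid_modelD[OF v] by (intro nn_integral_cong) (auto simp: indicator_def ennreal_mult)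
  finally show ?thesis .
qed

definition regret_T :: "nat \<Rightarrow> 'a::euclidean_space set \<Rightarrow> ('a \<Rightarrow> real) \<Rightarrow> ('a \<Rightarrow> real) \<Rightarrow> nat
    \<Rightarrow> (nat \<Rightarrow> 'a set) \<Rightarrow> ('a \<Rightarrow> bool) \<Rightarrow> ennreal" where
  "regret_T d M f \<eta> m T g = (\<integral>\<^sup>+x. indicator (\<Union>j<m. T j) x * ennreal (f x) *
      ennreal (if g x = bayes \<eta> x then 0 else \<bar>2 * \<eta> x - 1\<bar>) \<partial>vol_on d M)"

lemma risk_T_eq_bayes_add_regret:
  assumes v: "valid_model d M f \<eta>"
    and g[measurable]: "g \<in> measurable borel (count_space UNIV)"
    and U[measurable]: "(\<Union>j<m. T j) \<in> sets borel"
  shows "risk_T d M f \<eta> m T g = risk_T d M f \<eta> m T (bayes \<eta>) + regret_T d M f \<eta> m T g"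
proof -
  note [measurable] = valid_modelD(1,2)[OF v]
  have "ennreal (if g x then 1 - \<eta> x else \<eta> x) = ennreal (if bayes \<eta> x then 1 - \<eta> x else \<eta> x)
      + ennreal (if g x = bayes \<eta> x then 0 else \<bar>2 * \<eta> x - 1\<bar>)" for x
    using valid_modelD(4,5)[OF v, of x]
    by (auto simp: bayes_def abs_if ennreal_plus[symmetric] simp del: ennreal_plus)
  then show ?thesis
    unfolding risk_T_eq_nn_integral[OF v g U]
      risk_T_eq_nn_integral[OF v measurable_bayes[OF valid_modelD(2)[OF v]] U] regret_T_def
    by (subst nn_integral_add[symmetric]) (measurable, simp add: distrib_left)
qed

lemma measurable_estimator_apply:
  assumes "h \<in> estimators n" and sets_N: "sets N = sets (borel \<Otimes>\<^sub>M count_space UNIV)"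
    and "S \<in> space (PiM {..<n} (\<lambda>_. N))"
  shows "h S \<in> measurable borel (count_space UNIV)"
proof -
  have "space (PiM {..<n} (\<lambda>_. N)) = space (PiM {..<n} (\<lambda>_. borel \<Otimes>\<^sub>M count_space UNIV))"
    by (intro sets_eq_imp_space_eq sets_PiM_cong) (auto simp: sets_N)
  then show ?thesis
    using assms measurable_Pair2[of "\<lambda>p. h (fst p) (snd p)" _ borel _ S]
    by (simp add: estimators_def)
qed

lemma measurable_regret_T_estimator:
  assumes v: "valid_model d M f \<eta>" and h: "h \<in> estimators n"
    and U[measurable]: "(\<Union>j<m. T j) \<in> sets borel"
    and sets_N: "sets N = sets (borel \<Otimes>\<^sub>M count_space UNIV)"
  shows "(\<lambda>S. regret_T d M f \<eta> m T (h S)) \<in> borel_measurable (PiM {..<n} (\<lambda>_. N))"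
proof -
  note [measurable] = valid_modelD(1,2)[OF v]
  let ?Sample = "PiM {..<n} (\<lambda>_. borel \<Otimes>\<^sub>M count_space (UNIV::bool set))"
  have [measurable]: "(\<lambda>p. h (fst p) (snd p)) \<in> measurable (?Sample \<Otimes>\<^sub>M borel) (count_space UNIV)"
    using h by (simp add: estimators_def)
  \<comment> \<open>vol_on need not be sigma-finite, so integrate against the finite measure f \<cdot> vol_on instead\<close>
  define F where "F = density (vol_on d M) f"
  have sets_F: "sets F = sets borel"
    by (simp add: F_def sets_vol_on)
  have "emeasure F (space F) = (\<integral>\<^sup>+x. ennreal (f x) \<partial>vol_on d M)"
    unfolding F_def by (subst emeasure_density) auto
  then have "finite_measure F"
    using v by (intro finite_measureI) (simp add: valid_model_def)
  then have F: "sigma_finite_measure F"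
    by (rule finite_measure.axioms)
  define G where "G S x = indicator (\<Union>j<m. T j) x *
      ennreal (if h S x = bayes \<eta> x then 0 else \<bar>2 * \<eta> x - 1\<bar>)" for S x
  have "sets (PiM {..<n} (\<lambda>_. N) \<Otimes>\<^sub>M F) = sets (?Sample \<Otimes>\<^sub>M borel)"
    by (intro sets_pair_measure_cong sets_PiM_cong) (auto simp: sets_N sets_F)
  moreover have "case_prod G \<in> borel_measurable (?Sample \<Otimes>\<^sub>M borel)"
    unfolding G_def case_prod_beta by measurable
  ultimately have "(\<lambda>S. \<integral>\<^sup>+x. G S x \<partial>F) \<in> borel_measurable (PiM {..<n} (\<lambda>_. N))"
    using measurable_cong_sets by (intro sigma_finite_measure.borel_measurable_nn_integral[OF F]) blast
  moreover have "(\<integral>\<^sup>+x. G S x \<partial>F) = regret_T d M f \<eta> m T (h S)"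
    if "S \<in> space (PiM {..<n} (\<lambda>_. N))" for S
  proof -
    have [measurable]: "h S \<in> measurable borel (count_space UNIV)"
      by (rule measurable_estimator_apply[OF h sets_N that])
    have "G S \<in> borel_measurable (vol_on d M)"
      unfolding G_def by measurable
    then show ?thesis
      unfolding F_def regret_T_def by (simp add: nn_integral_density G_def mult_ac)
  qed
  ultimately show ?thesis
    by (rule measurable_cong[THEN iffD1, rotated])
qed

definition max_regret_T :: "nat \<Rightarrow> 'a::euclidean_space set \<Rightarrow> ('a \<Rightarrow> real) \<Rightarrow> ('a \<Rightarrow> real) \<Rightarrow> nat
    \<Rightarrow> (nat \<Rightarrow> 'a set) \<Rightarrow> ennreal" where
  "max_regret_T d M f \<eta> m T =
     (\<integral>\<^sup>+x. indicator (\<Union>j<m. T j) x * ennreal (f x) * ennreal \<bar>2 * \<eta> x - 1\<bar> \<partial>vol_on d M)"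

lemma regret_T_add_flip:
  assumes v: "valid_model d M f \<eta>"
    and not_half: "\<And>x. x \<in> (\<Union>j<m. T j) \<Longrightarrow> \<eta> x \<noteq> 1/2"
    and [measurable]: "g \<in> measurable borel (count_space UNIV)" "(\<Union>j<m. T j) \<in> sets borel"
  shows "regret_T d M f \<eta> m T g + regret_T d M f (\<lambda>x. 1 - \<eta> x) m T g = max_regret_T d M f \<eta> m T"
proof -
  note [measurable] = valid_modelD(1,2)[OF v]
  have "bayes (\<lambda>x. 1 - \<eta> x) x = (\<not> bayes \<eta> x)" "\<bar>2 * (1 - \<eta> x) - 1\<bar> = \<bar>2 * \<eta> x - 1\<bar>"
    if "x \<in> (\<Union>j<m. T j)" for x
    using not_half[OF that] by (auto simp: bayes_def)
  then show ?thesis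
    unfolding regret_T_def max_regret_T_def
    by (subst nn_integral_add[symmetric]) (measurable, intro nn_integral_cong, auto simp: indicator_def)
qed

definition expected_regret :: "nat \<Rightarrow> 'a::euclidean_space set \<Rightarrow> nat \<Rightarrow> (nat \<Rightarrow> 'a set) \<Rightarrow> nat
    \<Rightarrow> ((nat \<Rightarrow> 'a \<times> bool) \<Rightarrow> 'a \<Rightarrow> bool) \<Rightarrow> ('a \<Rightarrow> real) \<Rightarrow> ('a \<Rightarrow> real) \<Rightarrow> ennreal" where
  "expected_regret d M m T n h f \<eta> =
     (\<integral>\<^sup>+S. regret_T d M f \<eta> m T (h S) \<partial>PiM {..<n} (\<lambda>_. joint_law d M f \<eta>))"

lemma excess_risk_eq_expected_regret:
  assumes v: "valid_model d M f \<eta>" and h: "h \<in> estimators n"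
    and U: "(\<Union>j<m. T j) \<in> sets borel"
  shows "excess_risk d M m T n h f \<eta> = enn2ereal (expected_regret d M m T n h f \<eta>)"
proof -
  let ?P = "PiM {..<n} (\<lambda>_. joint_law d M f \<eta>)"
  let ?R = "risk_T d M f \<eta> m T (bayes \<eta>)"
  have "prob_space ?P"
    by (intro prob_space_PiM prob_space_joint_law[OF v])
  have "?R \<le> 1"
    unfolding risk_T_def by (rule prob_space.emeasure_le_1[OF prob_space_joint_law[OF v]])
  then obtain r where r: "?R = ennreal r" "0 \<le> r"
    by (cases ?R) (auto simp: top_unique)
  have "(\<integral>\<^sup>+S. risk_T d M f \<eta> m T (h S) \<partial>?P) = (\<integral>\<^sup>+S. ?R + regret_T d M f \<eta> m T (h S) \<partial>?P)"
    by (rule nn_integral_cong, rule risk_T_eq_bayes_add_regret[OF v _ U],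
        rule measurable_estimator_apply[OF h sets_joint_law])
  also have "\<dots> = ?R + expected_regret d M m T n h f \<eta>"
    using prob_space.emeasure_space_1[OF \<open>prob_space ?P\<close>]
    by (subst nn_integral_add)
       (auto intro: measurable_regret_T_estimator[OF v h U sets_joint_law] simp: expected_regret_def)
  finally show ?thesis
    unfolding excess_risk_def r(1) using r(2)
    by (cases "enn2ereal (expected_regret d M m T n h f \<eta>)") (auto simp: plus_ennreal.rep_eq enn2ereal_ennreal)
qed

lemma expected_regret_two_point:
  assumes v: "valid_model d M f \<eta>" and "0 \<le> e" and bounded: "\<And>x. e \<le> \<eta> x \<and> \<eta> x \<le> 1 - e"
    and not_half: "\<And>x. x \<in> (\<Union>j<m. T j) \<Longrightarrow> \<eta> x \<noteq> 1/2"
    and U: "(\<Union>j<m. T j) \<in> sets borel" and h: "h \<in> estimators n"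
  shows "ennreal (e ^ n) * max_regret_T d M f \<eta> m T
    \<le> expected_regret d M m T n h f \<eta> + expected_regret d M m T n h f (\<lambda>x. 1 - \<eta> x)"
proof -
  have v': "valid_model d M f (\<lambda>x. 1 - \<eta> x)"
    using v by (rule valid_model_flip)
  have "e \<le> 1"
    using bounded[of undefined] by linarith
  have "ennreal (e ^ card {..<n}) * max_regret_T d M f \<eta> m T
      \<le> (\<integral>\<^sup>+S. regret_T d M f \<eta> m T (h S) \<partial>PiM {..<n} (\<lambda>_. joint_law d M f \<eta>))
        + (\<integral>\<^sup>+S. regret_T d M f (\<lambda>x. 1 - \<eta> x) m T (h S) \<partial>PiM {..<n} (\<lambda>_. joint_law d M f (\<lambda>x. 1 - \<eta> x)))"
  proof (rule two_point_risk_lower_bound)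
    show "sets (joint_law d M f \<eta>) = sets (joint_law d M f (\<lambda>x. 1 - \<eta> x))"
      by (simp add: sets_joint_law)
    show "prob_space (joint_law d M f \<eta>)" "prob_space (joint_law d M f (\<lambda>x. 1 - \<eta> x))"
      using v v' by (auto intro: prob_space_joint_law)
    fix g :: "'a \<times> bool \<Rightarrow> ennreal"
    assume "g \<in> borel_measurable (joint_law d M f \<eta>)"
    moreover have "e * (1 - \<eta> x) \<le> \<eta> x" "e * (1 - (1 - \<eta> x)) \<le> 1 - \<eta> x" for x
      using bounded[of x] mult_left_le[of "\<eta> x" e] mult_left_le[of "1 - \<eta> x" e] \<open>0 \<le> e\<close>
      by (auto simp: mult.commute)
    ultimately show "ennreal e * integral\<^sup>N (joint_law d M f (\<lambda>x. 1 - \<eta> x)) g \<le> integral\<^sup>N (joint_law d M f \<eta>) g"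
      using \<open>0 \<le> e\<close> by (intro joint_law_dominated[OF v v'])
  next
    fix S assume "S \<in> space (PiM {..<n} (\<lambda>_. joint_law d M f \<eta>))"
    from measurable_estimator_apply[OF h sets_joint_law this]
    show "regret_T d M f \<eta> m T (h S) + regret_T d M f (\<lambda>x. 1 - \<eta> x) m T (h S) = max_regret_T d M f \<eta> m T"
      using regret_T_add_flip[OF v not_half _ U] by blast
  qed (use \<open>0 \<le> e\<close> \<open>e \<le> 1\<close> in \<open>auto intro: measurable_regret_T_estimator[OF _ h U sets_joint_law] v v'\<close>)
  then show ?thesis
    by (simp add: expected_regret_def)
qed

lemma max_regret_T_le_1:
  assumes v: "valid_model d M f \<eta>"
  shows "max_regret_T d M f \<eta> m T \<le> 1"
proof -
  have "max_regret_T d M f \<eta> m T \<le> (\<integral>\<^sup>+x. ennreal (f x) \<partial>vol_on d M)"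
    unfolding max_regret_T_def
  proof (rule nn_integral_mono)
    fix x
    have "\<bar>2 * \<eta> x - 1\<bar> \<le> 1"
      using valid_modelD(4,5)[OF v, of x] by auto
    then have "ennreal (f x) * ennreal \<bar>2 * \<eta> x - 1\<bar> \<le> ennreal (f x) * 1"
      by (intro mult_left_mono ennreal_leI) auto
    then show "indicator (\<Union>j<m. T j) x * ennreal (f x) * ennreal \<bar>2 * \<eta> x - 1\<bar> \<le> ennreal (f x)"
      by (auto simp: indicator_def)
  qed
  with v show ?thesis
    by (simp add: valid_model_def)
qed

lemma max_regret_T_pos:
  assumes v: "valid_model d M f \<eta>" and "0 < \<delta>"
    and margin: "\<And>x. x \<in> (\<Union>j<m. T j) \<Longrightarrow> \<delta> \<le> \<bar>2 * \<eta> x - 1\<bar>"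
    and [measurable]: "(\<Union>j<m. T j) \<in> sets borel"
    and mass: "(\<integral>\<^sup>+x \<in> (\<Union>j<m. T j). ennreal (f x) \<partial>vol_on d M) > 0"
  shows "max_regret_T d M f \<eta> m T > 0"
proof -
  note [measurable] = valid_modelD(1)[OF v]
  have "0 < ennreal \<delta> * (\<integral>\<^sup>+x \<in> (\<Union>j<m. T j). ennreal (f x) \<partial>vol_on d M)"
    using \<open>0 < \<delta>\<close> mass by (simp add: ennreal_zero_less_mult_iff)
  also have "\<dots> = (\<integral>\<^sup>+x. ennreal \<delta> * (ennreal (f x) * indicator (\<Union>j<m. T j) x) \<partial>vol_on d M)"
    by (rule nn_integral_cmult[symmetric]) measurable
  also have "\<dots> \<le> max_regret_T d M f \<eta> m T"
    unfolding max_regret_T_def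
  proof (intro nn_integral_mono)
    fix x
    show "ennreal \<delta> * (ennreal (f x) * indicator (\<Union>j<m. T j) x)
        \<le> indicator (\<Union>j<m. T j) x * ennreal (f x) * ennreal \<bar>2 * \<eta> x - 1\<bar>"
    proof (cases "x \<in> (\<Union>j<m. T j)")
      case True
      then have "ennreal \<delta> * ennreal (f x) \<le> ennreal \<bar>2 * \<eta> x - 1\<bar> * ennreal (f x)"
        by (intro mult_right_mono ennreal_leI margin) auto
      with True show ?thesis
        by (simp add: mult_ac)
    qed simp
  qed
  finally show ?thesis .
qed

lemma enn2real_max_regret_T_pos:
  assumes cls: "(f, \<eta>) \<in> model_class \<mu> \<alpha> d M \<kappa> \<epsilon>0 L C m T" and "0 \<le> \<epsilon>0"
    and U: "(\<Union>j<m. T j) \<in> sets borel"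
    and mass: "(\<integral>\<^sup>+x \<in> (\<Union>j<m. T j). ennreal (f x) \<partial>vol_on d M) > 0"
  shows "0 < enn2real (max_regret_T d M f \<eta> m T)"
proof -
  have v: "valid_model d M f \<eta>"
    using cls by (simp add: model_class_def)
  obtain \<delta> where "\<epsilon>0 < \<delta>" "\<forall>x \<in> (\<Union>j<m. T j). \<delta> \<le> \<bar>2 * \<eta> x - 1\<bar>"
    using cls unfolding model_class_def by blast
  then have "0 < max_regret_T d M f \<eta> m T"
    using \<open>0 \<le> \<epsilon>0\<close> by (intro max_regret_T_pos[where \<delta> = \<delta>, OF v _ _ U mass]) auto
  then show ?thesis
    using le_less_trans[OF max_regret_T_le_1[OF v] ennreal_one_less_top]
    by (simp add: enn2real_positive_iff)
qed

lemma abs_two_mult_one_minus: "\<bar>2 * (1 - t) - 1\<bar> = \<bar>2 * t - 1\<bar>" for t :: real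
  by (auto simp: abs_if)

lemma model_class_flip:
  assumes "(f, \<eta>) \<in> model_class \<mu> \<alpha> d M \<kappa> \<epsilon>0 L C m T"
  shows "(f, \<lambda>x. 1 - \<eta> x) \<in> model_class \<mu> \<alpha> d M \<kappa> \<epsilon>0 L C m T"
proof -
  have "\<bar>2 * (1 - \<eta> x) - 1\<bar> = \<bar>2 * \<eta> x - 1\<bar>" for x
    by (rule abs_two_mult_one_minus)
  moreover have "\<bar>(1 - \<eta> x) - (1 - \<eta> y)\<bar> = \<bar>\<eta> x - \<eta> y\<bar>" for x y
    by arith
  ultimately show ?thesis
    using assms by (auto simp: model_class_def valid_model_flip)
qed

lemma model_class_shrink:
  assumes cls: "(f, \<eta>) \<in> model_class \<mu> \<alpha> d M \<kappa> \<epsilon>0 L C m T"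
    and s: "0 < s" "s \<le> 1" and margin: "\<And>x. x \<in> (\<Union>j<m. T j) \<Longrightarrow> \<delta> \<le> \<bar>2 * \<eta> x - 1\<bar>"
    and "\<epsilon>0 < s * \<delta>"
  shows "(f, \<lambda>x. 1/2 + s * (\<eta> x - 1/2)) \<in> model_class \<mu> \<alpha> d M \<kappa> \<epsilon>0 L C m T"
proof -
  let ?\<eta> = "\<lambda>x. 1/2 + s * (\<eta> x - 1/2)"
  have v: "valid_model d M f \<eta>"
    using cls by (simp add: model_class_def)
  have deviation: "\<bar>s * (\<eta> x - 1/2)\<bar> \<le> 1/2" for x
  proof -
    have "\<bar>\<eta> x - 1/2\<bar> \<le> 1/2"
      using valid_modelD(4,5)[OF v, of x] by arith
    then have "s * \<bar>\<eta> x - 1/2\<bar> \<le> 1 * (1/2)"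
      using s by (intro mult_mono) auto
    then show ?thesis
      using s by (simp only: abs_mult abs_of_pos)
  qed
  have "0 \<le> ?\<eta> x \<and> ?\<eta> x \<le> 1" for x
    using deviation[of x] unfolding abs_le_iff by linarith
  moreover have "?\<eta> \<in> borel_measurable borel"
    using valid_modelD(2)[OF v] by measurable
  ultimately have "valid_model d M f ?\<eta>"
    using v by (simp add: valid_model_def)
  moreover have "\<exists>\<delta>'>\<epsilon>0. \<forall>x \<in> (\<Union>j<m. T j). \<delta>' \<le> \<bar>2 * ?\<eta> x - 1\<bar>"
  proof (intro exI conjI ballI)
    fix x assume "x \<in> (\<Union>j<m. T j)"
    have "2 * ?\<eta> x - 1 = s * (2 * \<eta> x - 1)"
      by (simp add: algebra_simps)
    then have "\<bar>2 * ?\<eta> x - 1\<bar> = s * \<bar>2 * \<eta> x - 1\<bar>"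
      using s by (simp only: abs_mult abs_of_pos)
    then show "s * \<delta> \<le> \<bar>2 * ?\<eta> x - 1\<bar>"
      using margin[OF \<open>x \<in> (\<Union>j<m. T j)\<close>] s by simp
  qed (fact \<open>\<epsilon>0 < s * \<delta>\<close>)
  moreover have "\<forall>x1\<in>M. \<forall>x2\<in>M. ennreal \<bar>?\<eta> x1 - ?\<eta> x2\<bar> \<le> ennreal L * fermat_dist \<mu> \<alpha> d M f x1 x2"
  proof (intro ballI)
    fix x1 x2 assume "x1 \<in> M" "x2 \<in> M"
    have "\<bar>?\<eta> x1 - ?\<eta> x2\<bar> \<le> \<bar>\<eta> x1 - \<eta> x2\<bar>"
      using s by (simp add: right_diff_distrib[symmetric] abs_mult mult_left_le_one_le)
    then have "ennreal \<bar>?\<eta> x1 - ?\<eta> x2\<bar> \<le> ennreal \<bar>\<eta> x1 - \<eta> x2\<bar>"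
      by (rule ennreal_leI)
    also have "\<dots> \<le> ennreal L * fermat_dist \<mu> \<alpha> d M f x1 x2"
      using cls \<open>x1 \<in> M\<close> \<open>x2 \<in> M\<close> by (simp add: model_class_def)
    finally show "ennreal \<bar>?\<eta> x1 - ?\<eta> x2\<bar> \<le> ennreal L * fermat_dist \<mu> \<alpha> d M f x1 x2" .
  qed
  ultimately show ?thesis
    using cls unfolding model_class_def by blast
qed

lemma model_class_bounded_away_flip_pair:
  assumes cls: "(f, \<eta>) \<in> model_class \<mu> \<alpha> d M \<kappa> \<epsilon>0 L C m T" and "0 \<le> \<epsilon>0"
  obtains \<eta>' e where "0 < e" "(f, \<eta>') \<in> model_class \<mu> \<alpha> d M \<kappa> \<epsilon>0 L C m T"
    "(f, \<lambda>x. 1 - \<eta>' x) \<in> model_class \<mu> \<alpha> d M \<kappa> \<epsilon>0 L C m T"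
    "\<And>x. e \<le> \<eta>' x \<and> \<eta>' x \<le> 1 - e"
proof -
  obtain \<delta> where "\<epsilon>0 < \<delta>" and margin: "\<forall>x \<in> (\<Union>j<m. T j). \<delta> \<le> \<bar>2 * \<eta> x - 1\<bar>"
    using cls unfolding model_class_def by blast
  define s where "s = (\<delta> + \<epsilon>0) / (2 * \<delta>)"
  have s: "0 < s" "s < 1" "\<epsilon>0 < s * \<delta>"
    using \<open>\<epsilon>0 < \<delta>\<close> \<open>0 \<le> \<epsilon>0\<close> by (auto simp: s_def field_simps)
  define \<eta>' where "\<eta>' x = 1/2 + s * (\<eta> x - 1/2)" for x
  have "(f, \<eta>') \<in> model_class \<mu> \<alpha> d M \<kappa> \<epsilon>0 L C m T"
    unfolding \<eta>'_def using s by (intro model_class_shrink[OF cls _ _ margin[rule_format]]) auto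
  moreover have "(f, \<lambda>x. 1 - \<eta>' x) \<in> model_class \<mu> \<alpha> d M \<kappa> \<epsilon>0 L C m T"
  proof -
    have flip_eq: "(\<lambda>x. 1 - \<eta>' x) = (\<lambda>x. 1/2 + s * ((1 - \<eta> x) - 1/2))"
      by (auto simp: \<eta>'_def algebra_simps)
    have "\<delta> \<le> \<bar>2 * (1 - \<eta> x) - 1\<bar>" if "x \<in> (\<Union>j<m. T j)" for x
      unfolding abs_two_mult_one_minus using margin that by blast
    then show ?thesis
      unfolding flip_eq using s by (intro model_class_shrink[OF model_class_flip[OF cls]]) auto
  qed
  moreover have "(1 - s) / 2 \<le> \<eta>' x \<and> \<eta>' x \<le> 1 - (1 - s) / 2" for x
  proof -
    have "0 \<le> \<eta> x" "\<eta> x \<le> 1"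
      using cls by (auto simp: model_class_def valid_model_def)
    with s have "0 \<le> s * \<eta> x" "s * \<eta> x \<le> s"
      by (auto intro: mult_left_le)
    then show ?thesis
      unfolding \<eta>'_def by (simp add: right_diff_distrib field_simps)
  qed
  ultimately show ?thesis
    using s that[of "(1 - s) / 2"] by auto
qed

lemma SUP_excess_risk_two_point:
  assumes cls: "(f, \<eta>) \<in> model_class \<mu> \<alpha> d M \<kappa> \<epsilon>0 L C m T"
    and cls_flip: "(f, \<lambda>x. 1 - \<eta> x) \<in> model_class \<mu> \<alpha> d M \<kappa> \<epsilon>0 L C m T"
    and "0 \<le> \<epsilon>0" and "0 \<le> e" and bounded: "\<And>x. e \<le> \<eta> x \<and> \<eta> x \<le> 1 - e"
    and U: "(\<Union>j<m. T j) \<in> sets borel" and h: "h \<in> estimators n"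
  shows "ereal (e ^ n * enn2real (max_regret_T d M f \<eta> m T) / 2)
    \<le> (SUP (f, \<eta>) \<in> model_class \<mu> \<alpha> d M \<kappa> \<epsilon>0 L C m T. excess_risk d M m T n h f \<eta>)"
proof -
  let ?A = "expected_regret d M m T n h f \<eta>" and ?B = "expected_regret d M m T n h f (\<lambda>x. 1 - \<eta> x)"
  define r where "r = e ^ n * enn2real (max_regret_T d M f \<eta> m T) / 2"
  have v: "valid_model d M f \<eta>"
    using cls by (simp add: model_class_def)
  have "\<eta> x \<noteq> 1/2" if "x \<in> (\<Union>j<m. T j)" for x
    using cls that \<open>0 \<le> \<epsilon>0\<close> by (fastforce simp: model_class_def)
  then have "ennreal (e ^ n) * max_regret_T d M f \<eta> m T \<le> ?A + ?B"
    by (rule expected_regret_two_point[OF v \<open>0 \<le> e\<close> bounded _ U h])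
  moreover have "max_regret_T d M f \<eta> m T \<noteq> \<top>"
    by (rule neq_top_trans[OF ennreal_one_neq_top max_regret_T_le_1[OF v]])
  ultimately have sum: "ennreal r + ennreal r \<le> ?A + ?B"
    using \<open>0 \<le> e\<close>
    by (simp add: r_def ennreal_plus[symmetric] ennreal_mult' ennreal_enn2real_if del: ennreal_plus)
  have "ennreal r \<le> ?A \<or> ennreal r \<le> ?B"
  proof (rule ccontr)
    assume "\<not> ?thesis"
    then have "?A + ?B < ennreal r + ennreal r"
      by (simp add: not_le add_strict_mono)
    with sum show False
      by simp
  qed
  moreover have r_eq: "ereal r = enn2ereal (ennreal r)"
    using \<open>0 \<le> e\<close> by (simp add: r_def enn2ereal_ennreal)
  ultimately show ?thesis
  proof (elim disjE)
    assume "ennreal r \<le> ?A"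
    then have "ereal r \<le> excess_risk d M m T n h f \<eta>"
      unfolding r_eq excess_risk_eq_expected_regret[OF v h U] less_eq_ennreal.rep_eq .
    then show ?thesis
      by (intro SUP_upper2[OF cls]) (simp add: r_def)
  next
    assume "ennreal r \<le> ?B"
    then have "ereal r \<le> excess_risk d M m T n h f (\<lambda>x. 1 - \<eta> x)"
      unfolding r_eq excess_risk_eq_expected_regret[OF valid_model_flip[OF v] h U]
        less_eq_ennreal.rep_eq .
    then show ?thesis
      by (intro SUP_upper2[OF cls_flip]) (simp add: r_def)
  qed
qed

theorem theorem1:
  fixes M :: "'a::euclidean_space set" and d :: nat
    and \<mu> :: "real \<Rightarrow> nat \<Rightarrow> real"
    and \<alpha> \<kappa> \<epsilon>0 L C :: real
    and m :: nat and T :: "nat \<Rightarrow> 'a set"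
  assumes manifold: "compact_manifold d M" and dpos: "d \<ge> 1"
    and mu_pos: "\<forall>a k. \<mu> a k > 0" and mu_one: "\<forall>k. \<mu> 1 k = 1"
    and alpha: "\<alpha> \<ge> 1" and kappa: "\<kappa> > 0" and eps: "\<epsilon>0 > 0" and Lpos: "L > 0" and Cpos: "C > 0"
    and T_closed: "\<forall>j<m. closed (T j) \<and> T j \<subseteq> M"
    and T_disj: "\<forall>i<m. \<forall>j<m. i \<noteq> j \<longrightarrow> T i \<inter> T j = {}"
    and nondegenerate: "\<exists>(f, \<eta>) \<in> model_class \<mu> \<alpha> d M \<kappa> \<epsilon>0 L C m T.
                           (\<integral>\<^sup>+ x \<in> (\<Union>j<m. T j). ennreal (f x) \<partial>vol_on d M) > 0"
  shows "\<exists>C1>0. \<exists>C2>0. \<forall>n\<ge>1.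
           (INF h \<in> estimators n. SUP (f, \<eta>) \<in> model_class \<mu> \<alpha> d M \<kappa> \<epsilon>0 L C m T.
               excess_risk d M m T n h f \<eta>)
           \<ge> ereal (C1 * exp (- C2 * real n))"
proof -
  let ?cls = "model_class \<mu> \<alpha> d M \<kappa> \<epsilon>0 L C m T"
  have U: "(\<Union>j<m. T j) \<in> sets borel"
    using T_closed by (intro sets.finite_UN) auto
  obtain f \<eta>\<^sub>0 where "(f, \<eta>\<^sub>0) \<in> ?cls"
    and mass: "(\<integral>\<^sup>+ x \<in> (\<Union>j<m. T j). ennreal (f x) \<partial>vol_on d M) > 0"
    using nondegenerate by auto
  then obtain \<eta> e where "0 < e" and cls: "(f, \<eta>) \<in> ?cls" and cls_flip: "(f, \<lambda>x. 1 - \<eta> x) \<in> ?cls"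
    and bounded: "\<And>x. e \<le> \<eta> x \<and> \<eta> x \<le> 1 - e"
    using eps by (blast elim: model_class_bounded_away_flip_pair[OF _ less_imp_le])
  have "0 < enn2real (max_regret_T d M f \<eta> m T)"
    using cls eps U mass by (intro enn2real_max_regret_T_pos) auto
  moreover have "e < 1"
    using bounded[of undefined] \<open>0 < e\<close> by linarith
  moreover have "exp (- (- ln e) * real n) = e ^ n" for n
    using \<open>0 < e\<close> exp_of_nat_mult[of n "ln e"] by (simp add: mult.commute)
  ultimately show ?thesis
    using SUP_excess_risk_two_point[OF cls cls_flip _ _ bounded U] eps \<open>0 < e\<close>
    by (intro exI[of _ "enn2real (max_regret_T d M f \<eta> m T) / 2"] exI[of _ "- ln e"] conjI allI impI
        INF_greatest) (auto simp: mult_ac)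
qed

end
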